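(* Let $\sigma$ be a primitive substitution on $\mathcal{A}$. Let $f\in C(X_\sigma,\mathbb{Z})$ and suppose there is $k\in\mathbb{N}$ such that $f$ is constant on each atom of $\mathcal{P}_k$. For $n\ge k$ define $\phi_n\in\mathbb{R}^{\mathcal{L}_2(X_\sigma)}$ by $$\phi_n(ab)=\sum_{j=0}^{|\sigma^n(a)|-1} f|_{T^j\sigma^n([ab])}\quad(ab\in\mathcal{L}_2(X_\sigma)),$$ where $f|_A$ denotes the constant value of $f$ on the atom $A$. Let $d=|\mathcal{L}_2(X_\sigma)|$. If $f$ is a coboundary, then $\phi_n\in\beta(R_1(X_\sigma))$ for all $n\ge k+d$.
   Context: $\sigma$ is a primitive substitution (non-erasing morphism of $\mathcal{A}^*$ with some power of $M_\sigma$, $M_\sigma(a,b)=|\sigma(b)|_a$, positive); $X_\sigma$ is the set of $x\in\mathcal{A}^{\mathbb Z}$ all of whose finite factors are factors of some $\sigma^n(a)$; $T$ is the shift; $\mathcal{L}_n(X_\sigma)$ is the set of length-$n$ factors. For bi-infinite $y$, $\sigma(y)$ is the concatenation of the $\sigma(y_i)$ with $\sigma(y_0)$ starting at index $0$; $[w]=\{x\in X_\sigma: x_0\cdots x_{|w|-1}=w\}$ and $\sigma^n([ab])=\{\sigma^n(y):y\in[ab]\}$. For $n\in\mathbb N$, $\mathcal{P}_n=\{T^j\sigma^n([ab]): ab\in\mathcal{L}_2(X_\sigma),\ 0\le j<|\sigma^n(a)|\}$; this is a partition of $X_\sigma$ into clopen sets (atoms). $f\in C(X_\sigma,\mathbb{R})$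 is a coboundary if $f=g\circ T-g$ for some $g\in C(X_\sigma,\mathbb{R})$. $R_1(X_\sigma)$ is the set of maps $\mathcal{A}\to\mathbb{R}$ (maps on $\mathcal{L}_1(X_\sigma)$), and $\beta:R_1(X_\sigma)\to\mathbb{R}^{\mathcal{L}_2(X_\sigma)}$ is $(\beta f)(ab)=f(b)-f(a)$. *)

theory Defs
  imports "HOL-Analysis.Analysis" "HOL-Library.Sublist"
begin

definition nonerasing :: "('a \<Rightarrow> 'a list) \<Rightarrow> bool" where
  "nonerasing \<sigma> \<longleftrightarrow> (\<forall>a. \<sigma> a \<noteq> [])"

definition substw :: "('a \<Rightarrow> 'a list) \<Rightarrow> 'a list \<Rightarrow> 'a list" where
  "substw \<sigma> w = concat (map \<sigma> w)"

definition substpow :: "('a \<Rightarrow> 'a list) \<Rightarrow> nat \<Rightarrow> 'a \<Rightarrow> 'a list" where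
  "substpow \<sigma> n a = (substw \<sigma> ^^ n) [a]"

definition substmat :: "('a \<Rightarrow> 'a list) \<Rightarrow> 'a \<Rightarrow> 'a \<Rightarrow> nat" where
  "substmat \<sigma> a b = count_list (\<sigma> b) a"

fun matpow :: "('a::finite \<Rightarrow> 'a \<Rightarrow> nat) \<Rightarrow> nat \<Rightarrow> 'a \<Rightarrow> 'a \<Rightarrow> nat" where
  "matpow M 0 = (\<lambda>a b. if a = b then 1 else 0)"
| "matpow M (Suc n) = (\<lambda>a b. \<Sum>c\<in>UNIV. M a c * matpow M n c b)"

definition primitive :: "('a::finite \<Rightarrow> 'a list) \<Rightarrow> bool" where
  "primitive \<sigma> \<longleftrightarrow> nonerasing \<sigma> \<and> (\<exists>p>0. \<forall>a b. matpow (substmat \<sigma>) p a b > 0)"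

definition factor_at :: "(int \<Rightarrow> 'a) \<Rightarrow> int \<Rightarrow> nat \<Rightarrow> 'a list" where
  "factor_at x i m = map (\<lambda>j. x (i + int j)) [0..<m]"

definition Xsub :: "('a \<Rightarrow> 'a list) \<Rightarrow> (int \<Rightarrow> 'a) set" where
  "Xsub \<sigma> = {x. \<forall>i m. \<exists>n a. sublist (factor_at x i m) (substpow \<sigma> n a)}"

definition shift :: "(int \<Rightarrow> 'a) \<Rightarrow> (int \<Rightarrow> 'a)" where
  "shift x = (\<lambda>i. x (i + 1))"

text \<open>Two-letter language, as pairs (a,b) for the word ab.\<close>
definition L2 :: "('a \<Rightarrow> 'a list) \<Rightarrow> ('a \<times> 'a) set" where
  "L2 \<sigma> = {(a, b). \<exists>x\<in>Xsub \<sigma>. \<exists>i. x i = a \<and> x (i + 1) = b}"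

definition cyl2 :: "('a \<Rightarrow> 'a list) \<Rightarrow> 'a \<Rightarrow> 'a \<Rightarrow> (int \<Rightarrow> 'a) set" where
  "cyl2 \<sigma> a b = {x\<in>Xsub \<sigma>. x 0 = a \<and> x 1 = b}"

text \<open>Application of a non-erasing morphism \<tau> to a bi-infinite sequence y:
  the concatenation of the \<tau>(y_i), with \<tau>(y_0) starting at index 0.
  pos \<tau> y i is the starting index of the block \<tau>(y_i).\<close>
definition pos :: "('a \<Rightarrow> 'b list) \<Rightarrow> (int \<Rightarrow> 'a) \<Rightarrow> int \<Rightarrow> int" where
  "pos \<tau> y i = (if 0 \<le> i then (\<Sum>j\<in>{0..<i}. int (length (\<tau> (y j))))
                else - (\<Sum>j\<in>{i..<0}. int (length (\<tau> (y j)))))"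

definition bisubst :: "('a \<Rightarrow> 'b list) \<Rightarrow> (int \<Rightarrow> 'a) \<Rightarrow> (int \<Rightarrow> 'b)" where
  "bisubst \<tau> y = (\<lambda>m. let i = (THE i. pos \<tau> y i \<le> m \<and> m < pos \<tau> y (i + 1))
                     in \<tau> (y i) ! nat (m - pos \<tau> y i))"

definition atom :: "('a \<Rightarrow> 'a list) \<Rightarrow> nat \<Rightarrow> 'a \<Rightarrow> 'a \<Rightarrow> nat \<Rightarrow> (int \<Rightarrow> 'a) set" where
  "atom \<sigma> n a b j = (shift ^^ j) ` (bisubst (substpow \<sigma> n) ` cyl2 \<sigma> a b)"

definition constval :: "('x \<Rightarrow> 'c) \<Rightarrow> 'x set \<Rightarrow> 'c" where
  "constval f A = f (SOME x. x \<in> A)"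

definition Xtop :: "('a \<Rightarrow> 'a list) \<Rightarrow> (int \<Rightarrow> 'a) topology" where
  "Xtop \<sigma> = subtopology (product_topology (\<lambda>_. discrete_topology UNIV) UNIV) (Xsub \<sigma>)"

definition coboundary :: "('a \<Rightarrow> 'a list) \<Rightarrow> ((int \<Rightarrow> 'a) \<Rightarrow> real) \<Rightarrow> bool" where
  "coboundary \<sigma> f \<longleftrightarrow> (\<exists>g. continuous_map (Xtop \<sigma>) euclidean g \<and>
      (\<forall>x\<in>Xsub \<sigma>. f x = g (shift x) - g x))"

definition phi :: "('a \<Rightarrow> 'a list) \<Rightarrow> ((int \<Rightarrow> 'a) \<Rightarrow> int) \<Rightarrow> nat \<Rightarrow> 'a \<times> 'a \<Rightarrow> real" where
  "phi \<sigma> f n ab = real_of_int (\<Sum>j<length (substpow \<sigma> n (fst ab)).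
                    constval f (atom \<sigma> n (fst ab) (snd ab) j))"

text \<open>beta : R_1 \<rightarrow> R^{L_2}, (beta h)(ab) = h(b) - h(a).\<close>
definition in_beta_image :: "('a \<Rightarrow> 'a list) \<Rightarrow> ('a \<times> 'a \<Rightarrow> real) \<Rightarrow> bool" where
  "in_beta_image \<sigma> \<phi> \<longleftrightarrow> (\<exists>h :: 'a \<Rightarrow> real. \<forall>(a, b)\<in>L2 \<sigma>. \<phi> (a, b) = h b - h a)"

end

(*
  Write f = g o T - g with g continuous. For y in [ab] the sum defining phi_n(ab) telescopes to
  g(sigma^n(Ty)) - g(sigma^n y). Deep inside the block sigma^N(y_0) the sequence sigma^N(y) depends
  on y_0 only, and there f is summed over atoms of P_k that are also determined by y_0; so for large
  N the value g(sigma^N y) is, up to an arbitrarily small error, a function D of y_0. The integer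
  vector phi_N is then within 1/(2(|A|+1)) of beta(D); translating D so that no value is close to an
  integer and rounding down yields an exact preimage, so phi_N lies in beta(R_1).
  On L_2 the vectors satisfy phi_(n+1) = A phi_n for a linear map A that leaves the image of beta
  invariant. That image has codimension at most d = |L_2|, so the increasing chain of subspaces
  {v. A^j v in the image} becomes stationary after at most d steps; hence phi_n lies in beta(R_1)
  for all n >= k + d.
*)

theory Submission
  imports Defs
begin

lemma substw_Nil [simp]: "substw \<sigma> [] = []"
  and substw_Cons [simp]: "substw \<sigma> (x # xs) = \<sigma> x @ substw \<sigma> xs"
  and substw_append [simp]: "substw \<sigma> (xs @ ys) = substw \<sigma> xs @ substw \<sigma> ys"
  by (simp_all add: substw_def)

lemma funpow_substw_eq_concat: "(substw \<sigma> ^^ n) w = concat (map (substpow \<sigma> n) w)"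
proof (induction w)
  case (Cons x w)
  have "(substw \<sigma> ^^ n) (xs @ ys) = (substw \<sigma> ^^ n) xs @ (substw \<sigma> ^^ n) ys" for xs ys
    by (induction n) auto
  from this[of "[x]" w] Cons show ?case by (simp add: substpow_def)
qed (induction n; simp)

lemma substpow_0 [simp]: "substpow \<sigma> 0 a = [a]"
  by (simp add: substpow_def)

lemma substpow_1 [simp]: "substpow \<sigma> (Suc 0) = \<sigma>"
  by (simp add: substpow_def substw_def fun_eq_iff)

lemma substpow_add: "substpow \<sigma> (m + k) a = concat (map (substpow \<sigma> k) (substpow \<sigma> m a))"
proof -
  have "substw \<sigma> ^^ (m + k) = substw \<sigma> ^^ k \<circ> substw \<sigma> ^^ m"
    by (simp add: funpow_add add.commute)
  then show ?thesis
    by (simp add: substpow_def funpow_substw_eq_concat[symmetric])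
qed

lemma substpow_Suc: "substpow \<sigma> (Suc n) a = concat (map \<sigma> (substpow \<sigma> n a))"
  using substpow_add[of \<sigma> n 1 a] by simp

lemma nonerasing_substpow: "nonerasing \<sigma> \<Longrightarrow> nonerasing (substpow \<sigma> n)"
  unfolding nonerasing_def
proof (induction n)
  case (Suc n)
  show ?case
  proof
    fix a
    obtain x where "x \<in> set (substpow \<sigma> n a)"
      using Suc by (metis list.set_intros(1) neq_Nil_conv)
    then show "substpow \<sigma> (Suc n) a \<noteq> []"
      using Suc.prems by (auto simp: substpow_Suc)
  qed
qed simp

section \<open>Blocks of a substituted bi-infinite sequence\<close>

lemma factor_at_0 [simp]: "factor_at x p 0 = []"
  and length_factor_at [simp]: "length (factor_at x p m) = m"
  and nth_factor_at [simp]: "j < m \<Longrightarrow> factor_at x p m ! j = x (p + int j)"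
  and factor_at_Suc: "factor_at x p (Suc m) = factor_at x p m @ [x (p + int m)]"
  by (simp_all add: factor_at_def)

lemma factor_at_add: "factor_at x p (m + m') = factor_at x p m @ factor_at x (p + int m) m'"
  by (rule nth_equalityI) (auto simp: nth_append add.assoc)

lemma factor_at_translate: "factor_at (\<lambda>t. x (t + s)) p m = factor_at x (p + s) m"
  by (simp add: factor_at_def algebra_simps)

lemma sublist_factor_at:
  assumes "q \<le> p" "p + int m \<le> q + int M"
  shows "sublist (factor_at x p m) (factor_at x q M)"
proof -
  define d where "d = nat (p - q)"
  have M: "M = d + (m + (M - d - m))"
    using assms unfolding d_def by linarith
  have "p = q + int d"
    using assms unfolding d_def by simp
  then show ?thesis
    by (subst M) (metis factor_at_add sublist_appendI)
qed

lemma pos_0 [simp]: "pos \<tau> y 0 = 0"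
  by (simp add: pos_def)

lemma pos_Suc: "pos \<tau> y (i + 1) = pos \<tau> y i + int (length (\<tau> (y i)))"
proof -
  consider "i \<ge> 0" | "i = -1" | "i < -1"
    by linarith
  then show ?thesis
  proof cases
    case 1
    then have "{0..<i+1} = insert i {0..<i}" by auto
    with 1 show ?thesis by (simp add: pos_def)
  next
    case 2
    then have "{i..<0} = {i}" by auto
    with 2 show ?thesis by (simp add: pos_def)
  next
    case 3
    then have "{i..<0} = insert i {i+1..<0}" by auto
    with 3 show ?thesis by (simp add: pos_def)
  qed
qed

lemma pos_unique:
  assumes "P 0 = 0" "\<And>i. P (i + 1) = P i + int (length (\<tau> (y i)))"
  shows "P i = pos \<tau> y i"
proof (induction i rule: int_induct[where k=0])
  case (step2 i)
  then show ?case
    using assms(2)[of "i - 1"] pos_Suc[of \<tau> y "i - 1"] by simp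
qed (simp_all add: assms pos_Suc)

lemma pos_add_length:
  "pos \<tau> y (p + int L) = pos \<tau> y p + int (length (concat (map \<tau> (factor_at y p L))))"
proof (induction L)
  case (Suc L)
  have "pos \<tau> y (p + int (Suc L)) = pos \<tau> y ((p + int L) + 1)"
    by (simp add: ac_simps)
  also have "\<dots> = pos \<tau> y (p + int L) + int (length (\<tau> (y (p + int L))))"
    by (rule pos_Suc)
  finally show ?case
    using Suc by (simp add: factor_at_Suc)
qed simp

lemma pos_nat_eq_length: "pos \<tau> y (int i) = int (length (concat (map \<tau> (factor_at y 0 i))))"
  using pos_add_length[of \<tau> y 0 i] by simp

lemma pos_cong: "0 \<le> i \<Longrightarrow> (\<And>t. 0 \<le> t \<Longrightarrow> t < i \<Longrightarrow> y t = y' t) \<Longrightarrow> pos \<tau> y i = pos \<tau> y' i"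
  by (auto simp: pos_def intro!: sum.cong)

lemma pos_translate: "pos \<tau> (\<lambda>t. y (t + s)) i = pos \<tau> y (i + s) - pos \<tau> y s"
proof (rule sym, rule pos_unique)
  fix i
  have "pos \<tau> y (i + 1 + s) = pos \<tau> y ((i + s) + 1)"
    by (simp add: ac_simps)
  then show "pos \<tau> y (i + 1 + s) - pos \<tau> y s = pos \<tau> y (i + s) - pos \<tau> y s + int (length (\<tau> (y (i + s))))"
    by (simp add: pos_Suc)
qed simp

lemma shift_funpow: "(shift ^^ n) x = (\<lambda>t. x (t + int n))"
  by (induction n) (auto simp: shift_def algebra_simps)

context
  fixes \<tau> :: "'a \<Rightarrow> 'a list"
  assumes nonerasing: "nonerasing \<tau>"
begin

lemma pos_add_ge: "pos \<tau> y i + int n \<le> pos \<tau> y (i + int n)"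
proof (induction n)
  case (Suc n)
  have "0 < length (\<tau> (y (i + int n)))"
    using nonerasing by (simp add: nonerasing_def)
  have "pos \<tau> y (i + int (Suc n)) = pos \<tau> y ((i + int n) + 1)"
    by (simp add: ac_simps)
  also have "\<dots> = pos \<tau> y (i + int n) + int (length (\<tau> (y (i + int n))))"
    by (rule pos_Suc)
  finally show ?case
    using Suc \<open>0 < length (\<tau> (y (i + int n)))\<close> by linarith
qed simp

lemma strict_mono_pos: "strict_mono (pos \<tau> y)"
proof
  fix i j :: int
  assume "i < j"
  then show "pos \<tau> y i < pos \<tau> y j"
    using pos_add_ge[of y i "nat (j - i)"] by simp
qed

lemma pos_le_pos_iff [simp]: "pos \<tau> y i \<le> pos \<tau> y j \<longleftrightarrow> i \<le> j"
  and pos_less_pos_iff [simp]: "pos \<tau> y i < pos \<tau> y j \<longleftrightarrow> i < j"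
  using strict_mono_pos by (simp_all add: strict_mono_less_eq strict_mono_less)

lemma pos_nonneg_iff [simp]: "0 \<le> pos \<tau> y i \<longleftrightarrow> 0 \<le> i"
  using pos_le_pos_iff[of y 0 i] by simp

lemma pos_ge_self: "0 \<le> i \<Longrightarrow> i \<le> pos \<tau> y i"
  using pos_add_ge[of y 0 "nat i"] by simp

lemma pos_le_self: "i \<le> 0 \<Longrightarrow> pos \<tau> y i \<le> i"
  using pos_add_ge[of y i "nat (- i)"] by simp

lemma pos_block_ex1: "\<exists>!i. pos \<tau> y i \<le> m \<and> m < pos \<tau> y (i + 1)"
proof -
  define i0 where "i0 = - \<bar>m\<bar>"
  have "m < pos \<tau> y (i0 + int (nat (2 * \<bar>m\<bar> + 1)))"
    using pos_ge_self[of "\<bar>m\<bar> + 1" y] by (simp add: i0_def)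
  then obtain n where n: "m < pos \<tau> y (i0 + int n)" "\<And>n'. n' < n \<Longrightarrow> \<not> m < pos \<tau> y (i0 + int n')"
    using exists_least_iff[of "\<lambda>n. m < pos \<tau> y (i0 + int n)"] by blast
  have "pos \<tau> y i0 \<le> m"
    using pos_le_self[of i0 y] by (simp add: i0_def)
  with n obtain n' where "n = Suc n'"
    by (metis add_0_right gr0_implies_Suc linorder_not_less of_nat_0 neq0_conv)
  with n have *: "pos \<tau> y (i0 + int n') \<le> m \<and> m < pos \<tau> y (i0 + int n' + 1)"
    by (simp add: ac_simps not_less)
  then show ?thesis
  proof (rule ex1I, elim conjE)
    fix i
    assume "pos \<tau> y i \<le> m" "m < pos \<tau> y (i + 1)"
    with * have "pos \<tau> y i < pos \<tau> y (i0 + int n' + 1)" "pos \<tau> y (i0 + int n') < pos \<tau> y (i + 1)"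
      by linarith+
    then show "i = i0 + int n'"
      by simp
  qed
qed

lemma bisubst_pos_add:
  assumes "j < length (\<tau> (y i))"
  shows "bisubst \<tau> y (pos \<tau> y i + int j) = \<tau> (y i) ! j"
proof -
  have "pos \<tau> y i \<le> pos \<tau> y i + int j \<and> pos \<tau> y i + int j < pos \<tau> y (i + 1)"
    using assms by (simp add: pos_Suc)
  then have "(THE i'. pos \<tau> y i' \<le> pos \<tau> y i + int j \<and> pos \<tau> y i + int j < pos \<tau> y (i' + 1)) = i"
    using pos_block_ex1 by (blast intro: the1_equality)
  then show ?thesis
    by (simp add: bisubst_def)
qed

lemma bisubst_eqI:
  assumes "\<And>i j. j < length (\<tau> (y i)) \<Longrightarrow> w (pos \<tau> y i + int j) = \<tau> (y i) ! j"
  shows "w = bisubst \<tau> y"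
proof
  fix m
  obtain i where i: "pos \<tau> y i \<le> m" "m < pos \<tau> y (i + 1)"
    using pos_block_ex1 by blast
  define j where "j = nat (m - pos \<tau> y i)"
  have "m = pos \<tau> y i + int j" "j < length (\<tau> (y i))"
    using i by (simp_all add: j_def pos_Suc)
  then show "w m = bisubst \<tau> y m"
    using assms bisubst_pos_add by simp
qed

lemma bisubst_translate: "bisubst \<tau> (\<lambda>t. y (t + s)) = (\<lambda>t. bisubst \<tau> y (t + pos \<tau> y s))"
proof (rule sym, rule bisubst_eqI)
  fix i j
  assume "j < length (\<tau> (y (i + s)))"
  then show "bisubst \<tau> y (pos \<tau> (\<lambda>t. y (t + s)) i + int j + pos \<tau> y s) = \<tau> (y (i + s)) ! j"
    using bisubst_pos_add[of j y "i + s"] by (simp add: pos_translate)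
qed

lemma bisubst_shift: "bisubst \<tau> (shift y) = (shift ^^ length (\<tau> (y 0))) (bisubst \<tau> y)"
  using bisubst_translate[of y 1] pos_Suc[of \<tau> y 0] by (simp add: shift_def shift_funpow)

lemma bisubst_nth_prefix:
  assumes "j \<le> length (\<tau> (y 0))"
  shows "bisubst \<tau> y (int j) = (\<tau> (y 0) @ [hd (\<tau> (y 1))]) ! j"
proof (cases "j < length (\<tau> (y 0))")
  case True
  then show ?thesis
    using bisubst_pos_add[of j y 0] by (simp add: nth_append)
next
  case False
  have "\<tau> (y 1) \<noteq> []"
    using nonerasing by (simp add: nonerasing_def)
  with False assms show ?thesis
    using bisubst_pos_add[of 0 y 1] pos_Suc[of \<tau> y 0] by (simp add: hd_conv_nth)
qed

lemma bisubst_concat_nth: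
  assumes "j < length (concat (map \<tau> (factor_at y p L)))"
  shows "bisubst \<tau> y (pos \<tau> y p + int j) = concat (map \<tau> (factor_at y p L)) ! j"
  using assms
proof (induction L arbitrary: j)
  case (Suc L)
  define w where "w = concat (map \<tau> (factor_at y p L))"
  show ?case
  proof (cases "j < length w")
    case True
    then show ?thesis
      using Suc.IH by (simp add: w_def factor_at_Suc nth_append)
  next
    case False
    then have "j - length w < length (\<tau> (y (p + int L)))"
      using Suc.prems by (simp add: w_def factor_at_Suc)
    moreover have "pos \<tau> y p + int j = pos \<tau> y (p + int L) + int (j - length w)"
      using False by (simp add: pos_add_length w_def)
    ultimately have "bisubst \<tau> y (pos \<tau> y p + int j) = \<tau> (y (p + int L)) ! (j - length w)"
      by (metis bisubst_pos_add)
    then show ?thesis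
      using False by (simp add: factor_at_Suc nth_append flip: w_def)
  qed
qed simp

lemma factor_at_bisubst:
  "factor_at (bisubst \<tau> y) (pos \<tau> y p) (length (concat (map \<tau> (factor_at y p L))))
     = concat (map \<tau> (factor_at y p L))"
  by (rule nth_equalityI) (simp_all add: bisubst_concat_nth)

end

lemma sublist_concat_map: "sublist xs ys \<Longrightarrow> sublist (concat (map f xs)) (concat (map f ys))"
  by (auto simp: sublist_def) blast

lemma Xsub_translate: "x \<in> Xsub \<sigma> \<Longrightarrow> (\<lambda>t. x (t + s)) \<in> Xsub \<sigma>"
  by (simp add: Xsub_def factor_at_translate)

lemma shift_funpow_in_Xsub: "x \<in> Xsub \<sigma> \<Longrightarrow> (shift ^^ n) x \<in> Xsub \<sigma>"
  by (simp add: shift_funpow Xsub_translate)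

lemma shift_in_Xsub: "x \<in> Xsub \<sigma> \<Longrightarrow> shift x \<in> Xsub \<sigma>"
  by (simp add: shift_def Xsub_translate)

lemma L2I: "x \<in> Xsub \<sigma> \<Longrightarrow> (x i, x (i + 1)) \<in> L2 \<sigma>"
  by (auto simp: L2_def)

lemma L2_iff_cyl2_nonempty: "(a, b) \<in> L2 \<sigma> \<longleftrightarrow> cyl2 \<sigma> a b \<noteq> {}"
proof
  assume "(a, b) \<in> L2 \<sigma>"
  then obtain x i where "x \<in> Xsub \<sigma>" "x i = a" "x (i + 1) = b"
    by (auto simp: L2_def)
  then have "(\<lambda>t. x (t + i)) \<in> cyl2 \<sigma> a b"
    by (simp add: cyl2_def Xsub_translate add.commute)
  then show "cyl2 \<sigma> a b \<noteq> {}"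
    by blast
qed (use L2I[of _ \<sigma> 0] in \<open>auto simp: cyl2_def\<close>)

context
  fixes \<sigma> :: "'a \<Rightarrow> 'a list"
  assumes nonerasing: "nonerasing \<sigma>"
begin

lemma bisubst_substpow_in_Xsub:
  assumes y: "y \<in> Xsub \<sigma>"
  shows "bisubst (substpow \<sigma> n) y \<in> Xsub \<sigma>"
  unfolding Xsub_def
proof (intro CollectI allI)
  fix p :: int and m :: nat
  let ?\<tau> = "substpow \<sigma> n"
  let ?u = "bisubst ?\<tau> y"
  define q where "q = - \<bar>p\<bar>"
  define L where "L = nat (2 * \<bar>p\<bar> + int m)"
  define W where "W = concat (map ?\<tau> (factor_at y q L))"
  have "pos ?\<tau> y q \<le> p"
    using pos_le_self[of ?\<tau> q y] nonerasing_substpow[OF nonerasing] by (simp add: q_def)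
  moreover have "p + int m \<le> pos ?\<tau> y q + int (length W)"
  proof -
    have "q + int L \<le> pos ?\<tau> y (q + int L)"
      by (rule pos_ge_self[OF nonerasing_substpow[OF nonerasing]]) (simp add: q_def L_def)
    moreover have "q + int L = \<bar>p\<bar> + int m"
      by (simp add: q_def L_def)
    ultimately show ?thesis
      using pos_add_length[of ?\<tau> y q L] by (simp add: W_def)
  qed
  ultimately have "sublist (factor_at ?u p m) (factor_at ?u (pos ?\<tau> y q) (length W))"
    by (rule sublist_factor_at)
  then have "sublist (factor_at ?u p m) W"
    using factor_at_bisubst[OF nonerasing_substpow[OF nonerasing]] by (simp add: W_def)
  moreover obtain N c where "sublist (factor_at y q L) (substpow \<sigma> N c)"
    using y unfolding Xsub_def by blast
  then have "sublist W (substpow \<sigma> (N + n) c)"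
    unfolding W_def substpow_add by (rule sublist_concat_map)
  ultimately show "\<exists>N a. sublist (factor_at ?u p m) (substpow \<sigma> N a)"
    by (meson sublist_order.order.trans)
qed

lemma pos_substpow_add:
  "pos (substpow \<sigma> k) (bisubst (substpow \<sigma> m) y) (pos (substpow \<sigma> m) y i) = pos (substpow \<sigma> (m + k)) y i"
proof (rule pos_unique)
  fix i
  let ?u = "bisubst (substpow \<sigma> m) y"
  have "factor_at ?u (pos (substpow \<sigma> m) y i) (length (substpow \<sigma> m (y i))) = substpow \<sigma> m (y i)"
    using factor_at_bisubst[OF nonerasing_substpow[OF nonerasing], of m y i 1]
    by (simp add: factor_at_def)
  then show "pos (substpow \<sigma> k) ?u (pos (substpow \<sigma> m) y (i + 1))
      = pos (substpow \<sigma> k) ?u (pos (substpow \<sigma> m) y i) + int (length (substpow \<sigma> (m + k) (y i)))"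
    by (simp add: pos_Suc pos_add_length substpow_add)
qed simp

lemma bisubst_substpow_add:
  "bisubst (substpow \<sigma> (m + k)) y = bisubst (substpow \<sigma> k) (bisubst (substpow \<sigma> m) y)"
proof (rule sym, rule bisubst_eqI[OF nonerasing_substpow[OF nonerasing]])
  fix i j
  assume j: "j < length (substpow \<sigma> (m + k) (y i))"
  let ?u = "bisubst (substpow \<sigma> m) y"
  let ?P = "pos (substpow \<sigma> m) y i"
  have block: "factor_at ?u ?P (length (substpow \<sigma> m (y i))) = substpow \<sigma> m (y i)"
    using factor_at_bisubst[OF nonerasing_substpow[OF nonerasing], of m y i 1]
    by (simp add: factor_at_def)
  show "bisubst (substpow \<sigma> k) ?u (pos (substpow \<sigma> (m + k)) y i + int j) = substpow \<sigma> (m + k) (y i) ! j"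
    using bisubst_concat_nth[OF nonerasing_substpow[OF nonerasing], of j k ?u ?P "length (substpow \<sigma> m (y i))"] j
    by (simp add: block substpow_add flip: pos_substpow_add)
qed

end

section \<open>Atoms of the partitions and the vectors phi_n\<close>

definition constant_on_atoms :: "('a \<Rightarrow> 'a list) \<Rightarrow> nat \<Rightarrow> ((int \<Rightarrow> 'a) \<Rightarrow> 'b) \<Rightarrow> bool" where
  "constant_on_atoms \<sigma> k f \<longleftrightarrow>
     (\<forall>(a, b)\<in>L2 \<sigma>. \<forall>j<length (substpow \<sigma> k a). \<exists>c. \<forall>x\<in>atom \<sigma> k a b j. f x = c)"

lemma constant_on_atomsD:
  assumes "constant_on_atoms \<sigma> k f" "j < length (substpow \<sigma> k a)"
    and "x \<in> atom \<sigma> k a b j" "x' \<in> atom \<sigma> k a b j"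
  shows "f x = f x'"
proof -
  have "(a, b) \<in> L2 \<sigma>"
    using assms(3) by (auto simp: atom_def L2_iff_cyl2_nonempty)
  with assms show ?thesis
    unfolding constant_on_atoms_def by fastforce
qed

context
  fixes \<sigma> :: "'a \<Rightarrow> 'a list"
  assumes nonerasing: "nonerasing \<sigma>"
begin

lemma shift_bisubst_in_atom:
  assumes "u \<in> Xsub \<sigma>" "0 \<le> i"
  shows "(shift ^^ (nat (pos (substpow \<sigma> k) u i) + j)) (bisubst (substpow \<sigma> k) u)
           \<in> atom \<sigma> k (u i) (u (i + 1)) j"
proof -
  have "(\<lambda>t. u (t + i)) \<in> cyl2 \<sigma> (u i) (u (i + 1))"
    using assms by (simp add: cyl2_def Xsub_translate add.commute)
  moreover have "0 \<le> pos (substpow \<sigma> k) u i"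
    using assms nonerasing_substpow[OF nonerasing] by simp
  then have "(shift ^^ (nat (pos (substpow \<sigma> k) u i) + j)) (bisubst (substpow \<sigma> k) u)
      = (shift ^^ j) (bisubst (substpow \<sigma> k) (\<lambda>t. u (t + i)))"
    by (simp add: bisubst_translate[OF nonerasing_substpow[OF nonerasing]] shift_funpow algebra_simps)
  ultimately show ?thesis
    unfolding atom_def by (metis image_eqI)
qed

lemma shift_bisubst_cong:
  assumes const: "constant_on_atoms \<sigma> k f"
    and u: "u \<in> Xsub \<sigma>" and u': "u' \<in> Xsub \<sigma>"
    and agree: "\<And>t. 0 \<le> t \<Longrightarrow> t \<le> int l \<Longrightarrow> u' t = u t"
    and p: "int p < pos (substpow \<sigma> k) u (int l)"
  shows "f ((shift ^^ p) (bisubst (substpow \<sigma> k) u')) = f ((shift ^^ p) (bisubst (substpow \<sigma> k) u))"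
proof -
  let ?\<tau> = "substpow \<sigma> k"
  have ne: "nonerasing ?\<tau>"
    using nonerasing by (rule nonerasing_substpow)
  obtain i where i: "pos ?\<tau> u i \<le> int p" "int p < pos ?\<tau> u (i + 1)"
    using pos_block_ex1[OF ne] by blast
  have "pos ?\<tau> u 0 < pos ?\<tau> u (i + 1)" "pos ?\<tau> u i < pos ?\<tau> u (int l)"
    using i p by simp_all
  then have i_bounds: "0 \<le> i" "i < int l"
    unfolding pos_less_pos_iff[OF ne] by simp_all
  have pos_eq: "pos ?\<tau> u' i = pos ?\<tau> u i"
    using i_bounds agree by (intro pos_cong) auto
  define j where "j = p - nat (pos ?\<tau> u i)"
  have p_eq: "p = nat (pos ?\<tau> u i) + j"
    using i(1) unfolding j_def by linarith
  have j: "j < length (?\<tau> (u i))"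
    using i unfolding j_def by (simp add: pos_Suc)
  have letters: "u' i = u i" "u' (i + 1) = u (i + 1)"
    using i_bounds agree by auto
  show ?thesis
    using shift_bisubst_in_atom[OF u i_bounds(1), of k j] shift_bisubst_in_atom[OF u' i_bounds(1), of k j]
    by (intro constant_on_atomsD[OF const j]) (simp_all add: p_eq pos_eq letters)
qed

lemma pos_bisubst_substpow_prefix:
  assumes "l \<le> length (substpow \<sigma> m (y 0))"
  shows "pos (substpow \<sigma> k) (bisubst (substpow \<sigma> m) y) (int l)
           = int (length (concat (map (substpow \<sigma> k) (take l (substpow \<sigma> m (y 0))))))"
proof -
  have "factor_at (bisubst (substpow \<sigma> m) y) 0 l = take l (substpow \<sigma> m (y 0))"
    using assms bisubst_nth_prefix[OF nonerasing_substpow[OF nonerasing]]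
    by (intro nth_equalityI) (simp_all add: nth_append)
  then show ?thesis
    by (simp add: pos_nat_eq_length)
qed

(* sigma^m(y) and sigma^m(y') agree on the positions 0..l, and these determine the atoms of P_k
   that contain the first positions of sigma^(m+k)(y), up to the block of the l-th letter. *)
lemma shift_bisubst_substpow_cong:
  assumes const: "constant_on_atoms \<sigma> k f"
    and y: "y \<in> Xsub \<sigma>" and y': "y' \<in> Xsub \<sigma>" and y0: "y' 0 = y 0"
    and l: "l \<le> length (substpow \<sigma> m (y 0))"
    and y1: "l = length (substpow \<sigma> m (y 0)) \<Longrightarrow> y' 1 = y 1"
    and j: "j < length (concat (map (substpow \<sigma> k) (take l (substpow \<sigma> m (y 0)))))"
  shows "f ((shift ^^ j) (bisubst (substpow \<sigma> (m + k)) y')) = f ((shift ^^ j) (bisubst (substpow \<sigma> (m + k)) y))"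
proof -
  let ?u = "bisubst (substpow \<sigma> m) y" and ?u' = "bisubst (substpow \<sigma> m) y'"
  let ?W = "substpow \<sigma> m (y 0)"
  have ne: "nonerasing (substpow \<sigma> m)"
    using nonerasing by (rule nonerasing_substpow)
  have "?u' t = ?u t" if "0 \<le> t" "t \<le> int l" for t
  proof -
    define i where "i = nat t"
    have i: "i \<le> length ?W" "i = length ?W \<Longrightarrow> y' 1 = y 1" and t: "t = int i"
      using that l y1 by (auto simp: i_def)
    have "?u (int i) = (?W @ [hd (substpow \<sigma> m (y 1))]) ! i"
      using i by (intro bisubst_nth_prefix[OF ne])
    moreover have "?u' (int i) = (?W @ [hd (substpow \<sigma> m (y' 1))]) ! i"
      using i y0 by (metis bisubst_nth_prefix[OF ne])
    ultimately show ?thesis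
      using i by (cases "i = length ?W") (simp_all add: t nth_append)
  qed
  moreover have "int j < pos (substpow \<sigma> k) ?u (int l)"
    using j l by (simp add: pos_bisubst_substpow_prefix)
  ultimately show ?thesis
    unfolding bisubst_substpow_add[OF nonerasing]
    by (rule shift_bisubst_cong[OF const bisubst_substpow_in_Xsub[OF nonerasing y]
        bisubst_substpow_in_Xsub[OF nonerasing y']])
qed

end

lemma sum_shift_funpow_coboundary:
  fixes F g :: "(int \<Rightarrow> 'a) \<Rightarrow> 'b::ab_group_add"
  assumes "\<forall>x\<in>Xsub \<sigma>. F x = g (shift x) - g x" "x \<in> Xsub \<sigma>"
  shows "(\<Sum>j<L. F ((shift ^^ j) x)) = g ((shift ^^ L) x) - g x"
proof (induction L)
  case (Suc L)
  have "F ((shift ^^ L) x) = g (shift ((shift ^^ L) x)) - g ((shift ^^ L) x)"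
    using assms(1) shift_funpow_in_Xsub[OF assms(2)] by (rule bspec)
  with Suc show ?case
    by simp
qed simp

context
  fixes \<sigma> :: "'a \<Rightarrow> 'a list"
  assumes nonerasing: "nonerasing \<sigma>"
begin

lemma phi_eq_sum_shift:
  assumes const: "constant_on_atoms \<sigma> k f" and "k \<le> n" and y: "y \<in> cyl2 \<sigma> a b"
  shows "phi \<sigma> f n (a, b) = real_of_int (\<Sum>j<length (substpow \<sigma> n a). f ((shift ^^ j) (bisubst (substpow \<sigma> n) y)))"
proof -
  define m where "m = n - k"
  have n: "n = m + k"
    using \<open>k \<le> n\<close> by (simp add: m_def)
  have "constval f (atom \<sigma> n a b j) = f ((shift ^^ j) (bisubst (substpow \<sigma> n) y))"
    if j: "j < length (substpow \<sigma> n a)" for j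
  proof -
    have "(shift ^^ j) (bisubst (substpow \<sigma> n) y) \<in> atom \<sigma> n a b j"
      unfolding atom_def by (intro imageI y)
    then have "(SOME x. x \<in> atom \<sigma> n a b j) \<in> atom \<sigma> n a b j"
      by (rule someI[of "\<lambda>x. x \<in> atom \<sigma> n a b j"])
    then obtain y' where y': "y' \<in> cyl2 \<sigma> a b"
      and some: "(SOME x. x \<in> atom \<sigma> n a b j) = (shift ^^ j) (bisubst (substpow \<sigma> n) y')"
      unfolding atom_def image_image by (rule imageE)
    have "f ((shift ^^ j) (bisubst (substpow \<sigma> n) y')) = f ((shift ^^ j) (bisubst (substpow \<sigma> n) y))"
      using y y' j unfolding n cyl2_def
      by (intro shift_bisubst_substpow_cong[OF nonerasing const, of _ _ "length (substpow \<sigma> m a)"])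
        (simp_all add: substpow_add)
    then show ?thesis
      by (simp add: constval_def some)
  qed
  then show ?thesis
    by (simp add: phi_def)
qed

lemma phi_eq_diff:
  assumes const: "constant_on_atoms \<sigma> k f"
    and cob: "\<forall>x\<in>Xsub \<sigma>. real_of_int (f x) = g (shift x) - g x"
    and "k \<le> n" and y: "y \<in> cyl2 \<sigma> a b"
  shows "phi \<sigma> f n (a, b) = g (bisubst (substpow \<sigma> n) (shift y)) - g (bisubst (substpow \<sigma> n) y)"
proof -
  have "y \<in> Xsub \<sigma>" "y 0 = a"
    using y by (simp_all add: cyl2_def)
  then show ?thesis
    using sum_shift_funpow_coboundary[OF cob bisubst_substpow_in_Xsub[OF nonerasing]]
    by (simp add: phi_eq_sum_shift[OF const \<open>k \<le> n\<close> y]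
        bisubst_shift[OF nonerasing_substpow[OF nonerasing]])
qed

lemma bisubst_cyl2_prefix:
  assumes "y \<in> cyl2 \<sigma> a b" "i \<le> length (\<sigma> a)"
  shows "bisubst \<sigma> y (int i) = (\<sigma> a @ [hd (\<sigma> b)]) ! i"
  using assms bisubst_nth_prefix[OF nonerasing] by (simp add: cyl2_def)

lemma bisubst_in_Xsub: "y \<in> Xsub \<sigma> \<Longrightarrow> bisubst \<sigma> y \<in> Xsub \<sigma>"
  using bisubst_substpow_in_Xsub[OF nonerasing, of y "Suc 0"] by simp

lemma pairs_in_L2:
  assumes "(a, b) \<in> L2 \<sigma>" "i < length (\<sigma> a)"
  shows "((\<sigma> a @ [hd (\<sigma> b)]) ! i, (\<sigma> a @ [hd (\<sigma> b)]) ! Suc i) \<in> L2 \<sigma>"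
proof -
  obtain y where y: "y \<in> cyl2 \<sigma> a b"
    using assms(1) by (auto simp: L2_iff_cyl2_nonempty)
  then have "bisubst \<sigma> y \<in> Xsub \<sigma>"
    by (simp add: cyl2_def bisubst_in_Xsub)
  from L2I[OF this, of "int i"] show ?thesis
    using assms(2) bisubst_cyl2_prefix[OF y, of i] bisubst_cyl2_prefix[OF y, of "Suc i"]
    by (simp add: add.commute)
qed

lemma phi_Suc:
  assumes const: "constant_on_atoms \<sigma> k f"
    and cob: "\<forall>x\<in>Xsub \<sigma>. real_of_int (f x) = g (shift x) - g x"
    and "k \<le> n" and ab: "(a, b) \<in> L2 \<sigma>"
  shows "phi \<sigma> f (Suc n) (a, b) =
     (\<Sum>i<length (\<sigma> a). phi \<sigma> f n ((\<sigma> a @ [hd (\<sigma> b)]) ! i, (\<sigma> a @ [hd (\<sigma> b)]) ! Suc i))"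
proof -
  obtain y where y: "y \<in> cyl2 \<sigma> a b"
    using ab by (auto simp: L2_iff_cyl2_nonempty)
  define w where "w = \<sigma> a @ [hd (\<sigma> b)]"
  define u where "u = bisubst \<sigma> y"
  have u: "u \<in> Xsub \<sigma>"
    using y by (simp add: u_def cyl2_def bisubst_in_Xsub)
  define G where "G i = g (bisubst (substpow \<sigma> n) (\<lambda>t. u (t + int i)))" for i
  have "phi \<sigma> f n (w ! i, w ! Suc i) = G (Suc i) - G i" if "i < length (\<sigma> a)" for i
  proof -
    have "(\<lambda>t. u (t + int i)) \<in> cyl2 \<sigma> (w ! i) (w ! Suc i)"
      using that u bisubst_cyl2_prefix[OF y, of i] bisubst_cyl2_prefix[OF y, of "Suc i"]
      by (simp add: cyl2_def Xsub_translate u_def w_def add.commute)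
    moreover have "shift (\<lambda>t. u (t + int i)) = (\<lambda>t. u (t + int (Suc i)))"
      by (simp add: shift_def algebra_simps)
    ultimately show ?thesis
      by (simp add: phi_eq_diff[OF const cob \<open>k \<le> n\<close>] G_def)
  qed
  then have "(\<Sum>i<length (\<sigma> a). phi \<sigma> f n (w ! i, w ! Suc i)) = G (length (\<sigma> a)) - G 0"
    by (simp add: sum_lessThan_telescope)
  also have "\<dots> = phi \<sigma> f (Suc n) (a, b)"
  proof -
    have "bisubst \<sigma> (shift y) = (\<lambda>t. u (t + int (length (\<sigma> a))))"
      using y by (simp add: bisubst_shift[OF nonerasing] shift_funpow u_def cyl2_def)
    moreover have "phi \<sigma> f (Suc n) (a, b)
        = g (bisubst (substpow \<sigma> (Suc n)) (shift y)) - g (bisubst (substpow \<sigma> (Suc n)) y)"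
      using \<open>k \<le> n\<close> by (intro phi_eq_diff[OF const cob _ y]) simp
    ultimately show ?thesis
      using bisubst_substpow_add[OF nonerasing, of 1 n] by (simp add: G_def u_def)
  qed
  finally show ?thesis
    by (simp add: w_def)
qed

end

section \<open>Uniform continuity on the subshift\<close>

lemma openin_cylinder:
  fixes x :: "int \<Rightarrow> 'a"
  assumes "finite F"
  shows "openin (product_topology (\<lambda>_. discrete_topology UNIV) UNIV) {x'. \<forall>t\<in>F. x' t = x t}"
proof -
  have "{x'. \<forall>t\<in>F. x' t = x t} = Pi\<^sub>E UNIV (\<lambda>t. if t \<in> F then {x t} else UNIV)"
    by (auto simp: PiE_UNIV_domain split: if_splits)
  moreover have "finite {t. (if t \<in> F then {x t} else UNIV) \<noteq> (UNIV :: 'a set)}"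
    by (rule finite_subset[OF _ assms]) auto
  ultimately show ?thesis
    by (simp add: openin_PiE_gen)
qed

lemma closedin_Xsub: "closedin (product_topology (\<lambda>_. discrete_topology UNIV) UNIV) (Xsub \<sigma>)"
proof -
  let ?P = "product_topology (\<lambda>_. discrete_topology UNIV) UNIV :: (int \<Rightarrow> 'a) topology"
  have "openin ?P (- Xsub \<sigma>)"
  proof (subst openin_subopen, intro ballI)
    fix x
    assume "x \<in> - Xsub \<sigma>"
    then obtain i m where bad: "\<forall>n a. \<not> sublist (factor_at x i m) (substpow \<sigma> n a)"
      by (auto simp: Xsub_def)
    define U where "U = {x'. \<forall>t\<in>{i..<i + int m}. x' t = x t}"
    have "x' \<notin> Xsub \<sigma>" if "x' \<in> U" for x'
    proof
      assume "x' \<in> Xsub \<sigma>"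
      then obtain n a where "sublist (factor_at x' i m) (substpow \<sigma> n a)"
        unfolding Xsub_def by blast
      moreover have "factor_at x' i m = factor_at x i m"
        using that by (simp add: U_def factor_at_def)
      ultimately show False
        using bad by simp
    qed
    then have "U \<subseteq> - Xsub \<sigma>"
      by blast
    moreover have "openin ?P U"
      unfolding U_def by (rule openin_cylinder) simp
    ultimately show "\<exists>T. openin ?P T \<and> x \<in> T \<and> T \<subseteq> - Xsub \<sigma>"
      by (auto simp: U_def)
  qed
  then show ?thesis
    by (simp add: closedin_def Compl_eq_Diff_UNIV)
qed

lemma compactin_Xsub:
  "compactin (product_topology (\<lambda>_. discrete_topology UNIV) UNIV) (Xsub (\<sigma> :: 'a::finite \<Rightarrow> 'a list))"
  by (intro closedin_compact_space closedin_Xsub)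
    (simp add: compact_space_product_topology compact_space_discrete_topology)

lemma continuous_map_Xtop_window:
  fixes g :: "(int \<Rightarrow> 'a) \<Rightarrow> real"
  assumes g: "continuous_map (Xtop \<sigma>) euclidean g" and e: "0 < e" and x: "x \<in> Xsub \<sigma>"
  shows "\<exists>R::nat. \<forall>x'\<in>Xsub \<sigma>. (\<forall>t. \<bar>t\<bar> \<le> int R \<longrightarrow> x' t = x t) \<longrightarrow> \<bar>g x' - g x\<bar> < e"
proof -
  let ?P = "product_topology (\<lambda>_. discrete_topology UNIV) UNIV :: (int \<Rightarrow> 'a) topology"
  let ?V = "{y \<in> Xsub \<sigma>. g y \<in> ball (g x) e}"
  have "openin (Xtop \<sigma>) {y \<in> topspace (Xtop \<sigma>). g y \<in> ball (g x) e}"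
    by (rule openin_continuous_map_preimage[OF g]) simp
  then have "openin (subtopology ?P (Xsub \<sigma>)) ?V"
    by (simp add: Xtop_def)
  then obtain U where U: "openin ?P U" "?V = U \<inter> Xsub \<sigma>"
    unfolding openin_subtopology by blast
  have "x \<in> ?V"
    using x e by simp
  then have "x \<in> U"
    using U(2) by blast
  then obtain W where W: "finite {i. W i \<noteq> UNIV}" "x \<in> Pi\<^sub>E UNIV W" "Pi\<^sub>E UNIV W \<subseteq> U"
    using U(1) unfolding openin_product_topology_alt by force
  define R where "R = Max (insert 0 ((\<lambda>i. nat \<bar>i\<bar>) ` {i. W i \<noteq> UNIV}))"
  have R: "\<bar>i\<bar> \<le> int R" if "W i \<noteq> UNIV" for i
  proof -
    have "nat \<bar>i\<bar> \<le> R"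
      unfolding R_def using W(1) that by (intro Max_ge) auto
    then show ?thesis
      by simp
  qed
  show ?thesis
  proof (intro exI[of _ R] ballI impI)
    fix x'
    assume x': "x' \<in> Xsub \<sigma>" and agree: "\<forall>t. \<bar>t\<bar> \<le> int R \<longrightarrow> x' t = x t"
    have "x' i \<in> W i" for i
      using W(2) R[of i] agree by (cases "W i = UNIV") (auto simp: PiE_UNIV_domain)
    then have "x' \<in> Pi\<^sub>E UNIV W"
      by (simp add: PiE_UNIV_domain)
    then have "x' \<in> ?V"
      using U(2) W(3) x' by blast
    then show "\<bar>g x' - g x\<bar> < e"
      by (simp add: dist_real_def abs_minus_commute)
  qed
qed

lemma continuous_map_Xtop_uniform_window:
  fixes \<sigma> :: "'a::finite \<Rightarrow> 'a list" and g :: "(int \<Rightarrow> 'a) \<Rightarrow> real"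
  assumes g: "continuous_map (Xtop \<sigma>) euclidean g" and e: "0 < e"
  shows "\<exists>R::nat. \<forall>x\<in>Xsub \<sigma>. \<forall>x'\<in>Xsub \<sigma>. (\<forall>t. \<bar>t\<bar> \<le> int R \<longrightarrow> x t = x' t) \<longrightarrow> \<bar>g x - g x'\<bar> < e"
proof -
  have "\<forall>x\<in>Xsub \<sigma>. \<exists>R::nat. \<forall>x'\<in>Xsub \<sigma>. (\<forall>t. \<bar>t\<bar> \<le> int R \<longrightarrow> x' t = x t) \<longrightarrow> \<bar>g x' - g x\<bar> < e / 2"
    using continuous_map_Xtop_window[OF g half_gt_zero[OF e]] by blast
  then obtain Rx where Rx: "\<forall>x\<in>Xsub \<sigma>. \<forall>x'\<in>Xsub \<sigma>.
      (\<forall>t. \<bar>t\<bar> \<le> int (Rx x) \<longrightarrow> x' t = x t) \<longrightarrow> \<bar>g x' - g x\<bar> < e / 2"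
    by (rule bchoice[THEN exE])
  define C where "C x = {x'. \<forall>t\<in>{- int (Rx x)..int (Rx x)}. x' t = x t}" for x
  have "\<forall>U\<in>C ` Xsub \<sigma>. openin (product_topology (\<lambda>_. discrete_topology UNIV) UNIV) U"
    unfolding C_def by (auto intro: openin_cylinder)
  moreover have "Xsub \<sigma> \<subseteq> \<Union> (C ` Xsub \<sigma>)"
    unfolding C_def by auto
  ultimately obtain FF where "finite FF" "FF \<subseteq> C ` Xsub \<sigma>" "Xsub \<sigma> \<subseteq> \<Union> FF"
    using compactin_Xsub[of \<sigma>] unfolding compactin_def by blast
  then obtain F where F: "finite F" "F \<subseteq> Xsub \<sigma>" "Xsub \<sigma> \<subseteq> \<Union> (C ` F)"
    using finite_subset_image by metis
  define R where "R = Max (insert 0 (Rx ` F))"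
  show ?thesis
  proof (intro exI[of _ R] ballI impI)
    fix x x'
    assume x: "x \<in> Xsub \<sigma>" and x': "x' \<in> Xsub \<sigma>" and agree: "\<forall>t. \<bar>t\<bar> \<le> int R \<longrightarrow> x t = x' t"
    obtain x0 where x0: "x0 \<in> F" "x \<in> C x0"
      using F(3) x by blast
    have "Rx x0 \<le> R"
      using F(1) x0(1) by (simp add: R_def)
    then have "\<forall>t. \<bar>t\<bar> \<le> int (Rx x0) \<longrightarrow> x t = x0 t" "\<forall>t. \<bar>t\<bar> \<le> int (Rx x0) \<longrightarrow> x' t = x0 t"
      using x0(2) agree by (auto simp: C_def abs_le_iff)
    moreover have "x0 \<in> Xsub \<sigma>"
      using F(2) x0(1) by blast
    ultimately have "\<bar>g x - g x0\<bar> < e / 2" "\<bar>g x' - g x0\<bar> < e / 2"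
      using Rx x x' by simp_all
    then show "\<bar>g x - g x'\<bar> < e"
      by linarith
  qed
qed

section \<open>Growth of a primitive substitution\<close>

lemma count_list_concat_map:
  fixes \<tau> :: "'a::finite \<Rightarrow> 'b list"
  shows "count_list (concat (map \<tau> w)) a = (\<Sum>c\<in>UNIV. count_list w c * count_list (\<tau> c) a)"
proof (induction w)
  case (Cons x w)
  have "(\<Sum>c\<in>UNIV. count_list (x # w) c * count_list (\<tau> c) a)
      = (\<Sum>c\<in>UNIV. (if c = x then count_list (\<tau> c) a else 0) + count_list w c * count_list (\<tau> c) a)"
    by (rule sum.cong) (auto simp: algebra_simps)
  with Cons show ?case
    by (simp add: sum.distrib)
qed simp

lemma matpow_substmat: "matpow (substmat \<sigma>) n a b = count_list (substpow \<sigma> n b) a"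
  by (induction n arbitrary: a b)
    (simp_all add: substmat_def substpow_Suc count_list_concat_map mult.commute)

lemma length_concat_map_ge:
  assumes "\<And>c. B \<le> length (f c)"
  shows "length w * B \<le> length (concat (map f w))"
  using assms by (induction w) (simp_all add: add_mono)

lemma length_substpow_mono:
  assumes "nonerasing \<sigma>" "m \<le> n"
  shows "length (substpow \<sigma> m a) \<le> length (substpow \<sigma> n a)"
proof -
  have "length (substpow \<sigma> n a) \<le> length (substpow \<sigma> (Suc n) a)" for n
    using length_concat_map_ge[of 1 \<sigma> "substpow \<sigma> n a"] assms(1)
    by (simp add: substpow_Suc nonerasing_def Suc_le_eq)
  then show ?thesis
    using assms(2) by (rule lift_Suc_mono_le)
qed

lemma primitive_length_substpow_unbounded:
  fixes \<sigma> :: "'a::finite \<Rightarrow> 'a list"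
  assumes prim: "primitive \<sigma>" and card: "2 \<le> CARD('a)"
  shows "\<exists>N0. \<forall>N\<ge>N0. \<forall>c. B \<le> length (substpow \<sigma> N c)"
proof -
  obtain p where p: "\<forall>a b. matpow (substmat \<sigma>) p a b > 0"
    using prim by (auto simp: primitive_def)
  have "set (substpow \<sigma> p b) = UNIV" for b
    using p by (metis UNIV_eq_I count_list_0_iff less_irrefl matpow_substmat)
  then have long: "2 \<le> length (substpow \<sigma> p b)" for b
    using card card_length[of "substpow \<sigma> p b"] by (metis order.trans)
  have pow: "2 ^ j \<le> length (substpow \<sigma> (p + j * p) b)" for j b
  proof (induction j arbitrary: b)
    case 0
    show ?case
      using long[of b] by simp
  next
    case (Suc j)
    have "2 ^ Suc j \<le> length (substpow \<sigma> p b) * 2 ^ j"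
      using long[of b] by simp
    also have "\<dots> \<le> length (concat (map (substpow \<sigma> (p + j * p)) (substpow \<sigma> p b)))"
      using Suc.IH by (rule length_concat_map_ge)
    also have "\<dots> = length (substpow \<sigma> (p + Suc j * p) b)"
      by (simp add: substpow_add[symmetric] ac_simps)
    finally show ?case .
  qed
  have "nonerasing \<sigma>"
    using prim by (simp add: primitive_def)
  show ?thesis
  proof (intro exI allI impI)
    fix N c
    assume N: "p + B * p \<le> N"
    have "B < 2 ^ B"
      by (rule less_exp)
    also have "\<dots> \<le> length (substpow \<sigma> (p + B * p) c)"
      by (rule pow)
    also have "\<dots> \<le> length (substpow \<sigma> N c)"
      using \<open>nonerasing \<sigma>\<close> N by (rule length_substpow_mono)
    finally show "B \<le> length (substpow \<sigma> N c)"
      by simp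
  qed
qed

section \<open>g o sigma^N nearly depends on the first letter only\<close>

lemma bisubst_cong_first_block:
  assumes "nonerasing \<tau>" "y' 0 = y 0" "0 \<le> t" "t < int (length (\<tau> (y 0)))"
  shows "bisubst \<tau> y' t = bisubst \<tau> y t"
proof -
  have "nat t < length (\<tau> (y 0))" "t = int (nat t)"
    using assms(3,4) by linarith+
  then show ?thesis
    using assms(2) bisubst_nth_prefix[OF assms(1), of "nat t"] by (metis less_imp_le nth_append)
qed

context
  fixes \<sigma> :: "'a \<Rightarrow> 'a list"
  assumes nonerasing: "nonerasing \<sigma>"
begin

lemma shift_bisubst_cong_first_letter:
  assumes const: "constant_on_atoms \<sigma> k f" and "k \<le> n"
    and y: "y \<in> Xsub \<sigma>" and y': "y' \<in> Xsub \<sigma>" and y0: "y' 0 = y 0"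
    and M: "\<And>c. length (substpow \<sigma> k c) \<le> M" and j: "j + M < length (substpow \<sigma> n (y 0))"
  shows "f ((shift ^^ j) (bisubst (substpow \<sigma> n) y')) = f ((shift ^^ j) (bisubst (substpow \<sigma> n) y))"
proof -
  define m where "m = n - k"
  have n: "n = m + k"
    using \<open>k \<le> n\<close> by (simp add: m_def)
  define W where "W = substpow \<sigma> m (y 0)"
  have "W \<noteq> []"
    using nonerasing_substpow[OF nonerasing] by (simp add: W_def nonerasing_def)
  have "substpow \<sigma> n (y 0) = concat (map (substpow \<sigma> k) W)"
    by (simp add: n W_def substpow_add)
  also have "\<dots> = concat (map (substpow \<sigma> k) (butlast W @ [last W]))"
    using \<open>W \<noteq> []\<close> by simp
  finally have "length (substpow \<sigma> n (y 0))
      = length (concat (map (substpow \<sigma> k) (butlast W))) + length (substpow \<sigma> k (last W))"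
    by simp
  then have "j < length (concat (map (substpow \<sigma> k) (take (length W - 1) W)))"
    using j M[of "last W"] by (simp add: butlast_conv_take)
  moreover have "0 < length W"
    using \<open>W \<noteq> []\<close> by simp
  ultimately show ?thesis
    unfolding n W_def
    by (intro shift_bisubst_substpow_cong[OF nonerasing const y y' y0, of "length (substpow \<sigma> m (y 0)) - 1"])
      linarith+
qed

end

lemma continuous_bisubst_close_same_first_letter:
  fixes \<sigma> :: "'a::finite \<Rightarrow> 'a list" and f :: "(int \<Rightarrow> 'a) \<Rightarrow> int"
  assumes prim: "primitive \<sigma>" and const: "constant_on_atoms \<sigma> k f"
    and cob: "\<forall>x\<in>Xsub \<sigma>. real_of_int (f x) = g (shift x) - g x"
    and g: "continuous_map (Xtop \<sigma>) euclidean g" and e: "0 < e"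
  shows "\<exists>N\<ge>k. \<forall>y\<in>Xsub \<sigma>. \<forall>y'\<in>Xsub \<sigma>. y' 0 = y 0 \<longrightarrow>
           \<bar>g (bisubst (substpow \<sigma> N) y') - g (bisubst (substpow \<sigma> N) y)\<bar> < e"
proof (cases "CARD('a) < 2")
  case True
  show ?thesis
  proof (intro exI[of _ k] conjI order.refl ballI impI)
    fix y y' :: "int \<Rightarrow> 'a"
    have "y' = y"
      using True card_le_Suc0_iff_eq[of "UNIV :: 'a set"] by fastforce
    then show "\<bar>g (bisubst (substpow \<sigma> k) y') - g (bisubst (substpow \<sigma> k) y)\<bar> < e"
      using e by simp
  qed
next
  case False
  have ne: "nonerasing \<sigma>"
    using prim by (simp add: primitive_def)
  obtain R where R: "\<forall>x\<in>Xsub \<sigma>. \<forall>x'\<in>Xsub \<sigma>. (\<forall>t. \<bar>t\<bar> \<le> int R \<longrightarrow> x t = x' t) \<longrightarrow> \<bar>g x - g x'\<bar> < e"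
    using continuous_map_Xtop_uniform_window[OF g e] by blast
  define M where "M = Max (range (\<lambda>c. length (substpow \<sigma> k c)))"
  have M: "length (substpow \<sigma> k c) \<le> M" for c
    unfolding M_def by (rule Max_ge) auto
  obtain N0 where N0: "\<forall>N\<ge>N0. \<forall>c. 2 * R + 2 + M \<le> length (substpow \<sigma> N c)"
    using primitive_length_substpow_unbounded[OF prim] False by fastforce
  define N where "N = max N0 k"
  show ?thesis
  proof (intro exI[of _ N] conjI ballI impI)
    show "k \<le> N"
      by (simp add: N_def)
  next
    fix y y'
    assume y: "y \<in> Xsub \<sigma>" and y': "y' \<in> Xsub \<sigma>" and y0: "y' 0 = y 0"
    let ?v = "bisubst (substpow \<sigma> N) y" and ?v' = "bisubst (substpow \<sigma> N) y'"
    have L: "2 * R + 2 + M \<le> length (substpow \<sigma> N (y 0))"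
      using N0 by (simp add: N_def)
    have v: "?v \<in> Xsub \<sigma>" "?v' \<in> Xsub \<sigma>"
      using bisubst_substpow_in_Xsub[OF ne] y y' by blast+
    (* g(v) = g(T^(R+1) v) - (sum over j <= R of f(T^j v)); the sum only involves atoms inside
       sigma^N(y_0), and T^(R+1) v is determined by y_0 on the window [-R, R]. *)
    have "(\<Sum>j<R + 1. real_of_int (f ((shift ^^ j) ?v'))) = (\<Sum>j<R + 1. real_of_int (f ((shift ^^ j) ?v)))"
      using L by (intro sum.cong refl arg_cong[of _ _ real_of_int]
          shift_bisubst_cong_first_letter[OF ne const _ y y' y0 M]) (auto simp: N_def)
    then have "g ?v' - g ?v = g ((shift ^^ (R + 1)) ?v') - g ((shift ^^ (R + 1)) ?v)"
      using sum_shift_funpow_coboundary[OF cob v(1)] sum_shift_funpow_coboundary[OF cob v(2)] by simp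
    also have "\<bar>\<dots>\<bar> < e"
    proof -
      have "(shift ^^ (R + 1)) ?v' t = (shift ^^ (R + 1)) ?v t" if "\<bar>t\<bar> \<le> int R" for t
        using that L y0 unfolding shift_funpow
        by (intro bisubst_cong_first_block[OF nonerasing_substpow[OF ne]]) auto
      then show ?thesis
        using R[rule_format, OF shift_funpow_in_Xsub[OF v(2)] shift_funpow_in_Xsub[OF v(1)]] by blast
    qed
    finally show "\<bar>g ?v' - g ?v\<bar> < e" .
  qed
qed

section \<open>Rounding to exact differences\<close>

lemma grid_points_near_same_point_eq:
  fixes x :: real and N j j' :: nat and z z' :: int
  assumes "j < N" "j' < N"
    and "\<bar>x - real j / real N - of_int z\<bar> < 1 / (2 * real N)"
    and "\<bar>x - real j' / real N - of_int z'\<bar> < 1 / (2 * real N)"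
  shows "j = j'"
proof -
  have N: "0 < real N"
    using assms(1) by simp
  define A where "A = x - real j / real N - of_int z"
  define B where "B = x - real j' / real N - of_int z'"
  have "\<bar>A - B\<bar> \<le> \<bar>A\<bar> + \<bar>B\<bar>"
    by (rule abs_triangle_ineq4)
  also have "\<dots> < 1 / real N"
    using assms(3,4) unfolding A_def B_def by (simp add: field_sum_of_halves[symmetric])
  finally have "real N * \<bar>A - B\<bar> < 1"
    using N by (simp add: field_simps)
  moreover have "real N * (A - B) = of_int (int j' - int j + int N * (z' - z))"
    using N by (simp add: A_def B_def field_simps)
  ultimately have "\<bar>of_int (int j' - int j + int N * (z' - z))\<bar> < (1 :: real)"
    by (metis N abs_mult abs_of_pos)
  then have "\<bar>int j' - int j + int N * (z' - z)\<bar> < 1"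
    by (metis of_int_abs of_int_less_1_iff)
  then have eq: "int j' - int j = int N * (z - z')"
    by (simp add: algebra_simps)
  show ?thesis
  proof (rule ccontr)
    assume "j \<noteq> j'"
    with eq have "z \<noteq> z'"
      by auto
    then have "int N * 1 \<le> int N * \<bar>z - z'\<bar>"
      by (intro mult_left_mono) auto
    then have "int N \<le> \<bar>int j' - int j\<bar>"
      by (simp add: eq abs_mult)
    with assms(1,2) show False
      by linarith
  qed
qed

lemma exists_grid_point_far:
  fixes D :: "'a::finite \<Rightarrow> real"
  defines "N \<equiv> CARD('a) + 1"
  obtains j where "j < N" "\<And>a z. 1 / (2 * real N) \<le> \<bar>D a - real j / real N - of_int z\<bar>"
proof -
  define near where "near a = {j. j < N \<and> (\<exists>z. \<bar>D a - real j / real N - of_int z\<bar> < 1 / (2 * real N))}" for a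
  have "card (near a) \<le> 1" for a
  proof -
    have "finite (near a)"
      by (rule finite_subset[of _ "{..<N}"]) (auto simp: near_def)
    moreover have "\<forall>j\<in>near a. \<forall>j'\<in>near a. j = j'"
      unfolding near_def using grid_points_near_same_point_eq by blast
    ultimately show ?thesis
      using card_le_Suc0_iff_eq by auto
  qed
  then have "card (\<Union>a. near a) \<le> CARD('a)"
    using card_UN_le[of UNIV near] sum_mono[of UNIV "\<lambda>a. card (near a)" "\<lambda>_. 1"] by simp
  then have "\<not> {..<N} \<subseteq> (\<Union>a. near a)"
    using card_mono[of "\<Union>a. near a" "{..<N}"] by (auto simp: N_def near_def)
  then obtain j where "j < N" "\<And>a. j \<notin> near a"
    by blast
  then show ?thesis
    using that by (auto simp: near_def not_less)
qed

lemma exact_differences_of_integer_approximation: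
  fixes \<phi> :: "'a::finite \<times> 'a \<Rightarrow> real" and D :: "'a \<Rightarrow> real"
  assumes int: "\<forall>p\<in>S. \<phi> p \<in> \<int>"
    and near: "\<forall>(a, b)\<in>S. \<bar>\<phi> (a, b) - (D b - D a)\<bar> < 1 / (2 * real (CARD('a) + 1))"
  shows "\<exists>h. \<forall>(a, b)\<in>S. \<phi> (a, b) = h b - h a"
proof -
  define N where "N = CARD('a) + 1"
  obtain j where j: "\<And>a z. 1 / (2 * real N) \<le> \<bar>D a - real j / real N - of_int z\<bar>"
    using exists_grid_point_far[of D] unfolding N_def by blast
  (* After translating by the grid point j/N no value D a is within 1/(2N) of an integer,
     so rounding down turns the approximate potential D into an exact one. *)
  define h where "h a = \<lfloor>D a - real j / real N\<rfloor>" for a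
  have frac: "1 / (2 * real N) \<le> D a - real j / real N - of_int (h a)"
    "D a - real j / real N - of_int (h a) \<le> 1 - 1 / (2 * real N)" for a
    using j[of a "h a"] j[of a "h a + 1"] of_int_floor_le[of "D a - real j / real N"]
      real_of_int_floor_add_one_gt[of "D a - real j / real N"]
    unfolding h_def by (auto simp: abs_if split: if_splits)
  have "\<phi> (a, b) = of_int (h b) - of_int (h a)" if "(a, b) \<in> S" for a b
  proof -
    from int that have "\<phi> (a, b) \<in> \<int>"
      by blast
    then obtain m where m: "\<phi> (a, b) = of_int m"
      by (rule Ints_cases)
    have "\<bar>of_int m - (D b - D a)\<bar> < 1 / (2 * real N)"
      using near that m by (auto simp: N_def)
    then have "h b = h a + m"
      unfolding h_def using frac[of a] unfolding h_def
      by (intro floor_unique) (auto simp: abs_less_iff)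
    then show ?thesis
      by (simp add: m)
  qed
  then show ?thesis
    by (intro exI[of _ "\<lambda>a. of_int (h a)"]) auto
qed

section \<open>Stationarity of preimages of an invariant subspace\<close>

lemma linear_funpow:
  fixes A :: "'a::real_vector \<Rightarrow> 'a"
  shows "linear A \<Longrightarrow> linear (A ^^ n)"
proof (induction n)
  case 0
  show ?case
    by (simp add: linear_iff)
next
  case (Suc n)
  then have "linear (A \<circ> A ^^ n)"
    by (intro linear_compose)
  then show ?case
    by (simp add: comp_def)
qed

lemma funpow_in_invariant_subspace_stable:
  fixes A :: "'v::euclidean_space \<Rightarrow> 'v"
  assumes lin: "linear A" and B: "subspace B" and inv: "A ` B \<subseteq> B"
    and codim: "DIM('v) \<le> dim B + d" and M: "(A ^^ M) v \<in> B" and "d \<le> m"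
  shows "(A ^^ m) v \<in> B"
proof -
  (* The preimages W j form an increasing chain of subspaces, stationary from its first repetition
     on; as dim (W 0) >= DIM('v) - d, a repetition occurs within d steps. *)
  define W where "W j = (A ^^ j) -` B" for j
  have subspace_W: "subspace (W j)" for j
    unfolding W_def using linear_funpow[OF lin] B by (rule linear_subspace_vimage)
  have W_Suc: "W j \<subseteq> W (Suc j)" for j
    using inv by (auto simp: W_def)
  then have W_mono: "j \<le> j' \<Longrightarrow> W j \<subseteq> W j'" for j j'
    by (rule lift_Suc_mono_le)
  have W_Suc_eq: "W (Suc j) = A -` W j" for j
    by (auto simp: W_def funpow_Suc_right simp del: funpow.simps)
  have W_stable: "W (j + i) = W j" if "W (Suc j) = W j" for j i
  proof (induction i)
    case (Suc i)
    have "W (j + Suc i) = A -` W (j + i)"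
      by (simp add: W_Suc_eq)
    also have "\<dots> = W j"
      using Suc that by (simp add: W_Suc_eq)
    finally show ?case .
  qed simp
  obtain j where j: "j \<le> d" "W (Suc j) = W j"
  proof (rule ccontr)
    assume "\<not> thesis"
    with that have strict: "W (Suc j) \<noteq> W j" if "j \<le> d" for j
      using that by blast
    have "dim (W j) < dim (W (Suc j))" if "j \<le> d" for j
    proof (rule ccontr)
      assume "\<not> dim (W j) < dim (W (Suc j))"
      then have "W j = W (Suc j)"
        by (intro subspace_dim_equal subspace_W W_Suc) simp
      with strict[OF that] show False
        by simp
    qed
    then have "dim (W 0) + j \<le> dim (W j)" if "j \<le> Suc d" for j
      using that
    proof (induction j)
      case (Suc j)
      then have "dim (W 0) + j \<le> dim (W j)" "dim (W j) < dim (W (Suc j))"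
        by simp_all
      then show ?case
        by simp
    qed simp
    from this[of "Suc d"] have "DIM('v) < dim (W (Suc d))"
      using codim by (simp add: W_def)
    then show False
      using dim_subset_UNIV[of "W (Suc d)"] by simp
  qed
  have "W (d + i) = W d" for i
    using W_stable[OF j(2), of "d - j + i"] W_stable[OF j(2), of "d - j"] j(1) by simp
  then have "v \<in> W d"
    using M W_mono[of M "d + M"] by (auto simp: W_def)
  then show ?thesis
    using W_mono[OF \<open>d \<le> m\<close>] by (auto simp: W_def)
qed

lemma dim_ge_if_contains_vanishing:
  fixes B :: "(real ^ 'n) set"
  assumes "subspace B" "{v. \<forall>i\<in>S. v $ i = 0} \<subseteq> B"
  shows "DIM(real ^ 'n) \<le> dim B + card S"
proof -
  have "dim {v :: real ^ 'n. \<forall>i. i \<notin> - S \<longrightarrow> v $ i = 0} = card (- S)"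
    using dim_substandard_cart[where 'a=real, of "- S"] by (simp add: dim_vec_eq)
  moreover have "card (- S) = CARD('n) - card S"
    by (simp add: Compl_eq_Diff_UNIV card_Diff_subset)
  moreover have "dim {v :: real ^ 'n. \<forall>i. i \<notin> - S \<longrightarrow> v $ i = 0} \<le> dim B"
    using assms(2) by (intro dim_subset) auto
  ultimately show ?thesis
    by simp
qed

section \<open>The linear recursion for phi_n\<close>

(* The two-letter factors of sigma(ab) that start inside sigma(a) are those of sigma(a) followed by
   the first letter of sigma(b); this map realises phi_(n+1) = A phi_n on L_2 (see phi_Suc). *)
definition pair_step :: "('a::finite \<Rightarrow> 'a list) \<Rightarrow> real ^ ('a \<times> 'a) \<Rightarrow> real ^ ('a \<times> 'a)" where
  "pair_step \<sigma> v = (\<chi> p. case p of (a, b) \<Rightarrow>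
     \<Sum>i<length (\<sigma> a). v $ ((\<sigma> a @ [hd (\<sigma> b)]) ! i, (\<sigma> a @ [hd (\<sigma> b)]) ! Suc i))"

lemma pair_step_nth:
  "pair_step \<sigma> v $ (a, b) = (\<Sum>i<length (\<sigma> a). v $ ((\<sigma> a @ [hd (\<sigma> b)]) ! i, (\<sigma> a @ [hd (\<sigma> b)]) ! Suc i))"
  by (simp add: pair_step_def)

lemma linear_pair_step: "linear (pair_step \<sigma>)"
  by (intro linearI) (simp_all add: vec_eq_iff pair_step_nth sum.distrib sum_distrib_left)

lemma in_beta_image_cong:
  assumes "\<And>p. p \<in> L2 \<sigma> \<Longrightarrow> \<phi> p = \<psi> p"
  shows "in_beta_image \<sigma> \<phi> \<longleftrightarrow> in_beta_image \<sigma> \<psi>"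
proof -
  have "(\<forall>(a, b)\<in>L2 \<sigma>. \<phi> (a, b) = h b - h a) \<longleftrightarrow> (\<forall>(a, b)\<in>L2 \<sigma>. \<psi> (a, b) = h b - h a)" for h
    using assms by auto
  then show ?thesis
    by (simp add: in_beta_image_def)
qed

lemma subspace_beta_image: "subspace {v. in_beta_image \<sigma> (($) v)}"
proof (unfold subspace_def, intro conjI ballI allI)
  show "0 \<in> {v. in_beta_image \<sigma> (($) v)}"
    by (auto simp: in_beta_image_def intro: exI[of _ "\<lambda>_. 0"])
next
  fix v w
  assume "v \<in> {v. in_beta_image \<sigma> (($) v)}" "w \<in> {v. in_beta_image \<sigma> (($) v)}"
  then obtain h h' where "\<And>a b. (a, b) \<in> L2 \<sigma> \<Longrightarrow> v $ (a, b) = h b - h a"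
    "\<And>a b. (a, b) \<in> L2 \<sigma> \<Longrightarrow> w $ (a, b) = h' b - h' a"
    by (fastforce simp: in_beta_image_def)
  then show "v + w \<in> {v. in_beta_image \<sigma> (($) v)}"
    unfolding in_beta_image_def by (intro CollectI exI[of _ "\<lambda>c. h c + h' c"]) auto
next
  fix c :: real and v
  assume "v \<in> {v. in_beta_image \<sigma> (($) v)}"
  then obtain h where "\<And>a b. (a, b) \<in> L2 \<sigma> \<Longrightarrow> v $ (a, b) = h b - h a"
    by (fastforce simp: in_beta_image_def)
  then show "c *\<^sub>R v \<in> {v. in_beta_image \<sigma> (($) v)}"
    unfolding in_beta_image_def by (intro CollectI exI[of _ "\<lambda>x. c * h x"]) (auto simp: right_diff_distrib)
qed

lemma in_beta_image_pair_step:
  assumes "nonerasing \<sigma>" "in_beta_image \<sigma> (($) v)"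
  shows "in_beta_image \<sigma> (($) (pair_step \<sigma> v))"
proof -
  obtain h where h: "\<forall>(a, b)\<in>L2 \<sigma>. v $ (a, b) = h b - h a"
    using assms(2) by (auto simp: in_beta_image_def)
  have "pair_step \<sigma> v $ (a, b) = h (hd (\<sigma> b)) - h (hd (\<sigma> a))" if ab: "(a, b) \<in> L2 \<sigma>" for a b
  proof -
    define w where "w = \<sigma> a @ [hd (\<sigma> b)]"
    have "pair_step \<sigma> v $ (a, b) = (\<Sum>i<length (\<sigma> a). h (w ! Suc i) - h (w ! i))"
      using h pairs_in_L2[OF assms(1) ab] by (auto simp: pair_step_nth w_def intro!: sum.cong)
    also have "\<dots> = h (w ! length (\<sigma> a)) - h (w ! 0)"
      by (rule sum_lessThan_telescope)
    also have "\<dots> = h (hd (\<sigma> b)) - h (hd (\<sigma> a))"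
      using assms(1) by (simp add: w_def nth_append hd_conv_nth nonerasing_def)
    finally show ?thesis .
  qed
  then show ?thesis
    unfolding in_beta_image_def by (intro exI[of _ "\<lambda>c. h (hd (\<sigma> c))"]) auto
qed

lemma funpow_pair_step_phi:
  fixes \<sigma> :: "'a::finite \<Rightarrow> 'a list"
  assumes "nonerasing \<sigma>" "constant_on_atoms \<sigma> k f"
    and "\<forall>x\<in>Xsub \<sigma>. real_of_int (f x) = g (shift x) - g x"
  shows "p \<in> L2 \<sigma> \<Longrightarrow> ((pair_step \<sigma> ^^ j) (\<chi> q. phi \<sigma> f k q)) $ p = phi \<sigma> f (k + j) p"
proof (induction j arbitrary: p)
  case (Suc j)
  obtain a b where p: "p = (a, b)"
    by fastforce
  have "(pair_step \<sigma> ^^ Suc j) (\<chi> q. phi \<sigma> f k q) $ p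
      = (\<Sum>i<length (\<sigma> a). phi \<sigma> f (k + j) ((\<sigma> a @ [hd (\<sigma> b)]) ! i, (\<sigma> a @ [hd (\<sigma> b)]) ! Suc i))"
    using Suc pairs_in_L2[OF assms(1)] by (auto simp: p pair_step_nth intro!: sum.cong)
  also have "\<dots> = phi \<sigma> f (k + Suc j) p"
    using Suc.prems phi_Suc[OF assms, of "k + j" a b] by (simp add: p)
  finally show ?case .
qed simp

lemma exists_level_phi_in_beta_image:
  fixes \<sigma> :: "'a::finite \<Rightarrow> 'a list" and f :: "(int \<Rightarrow> 'a) \<Rightarrow> int"
  assumes prim: "primitive \<sigma>" and const: "constant_on_atoms \<sigma> k f"
    and cob: "\<forall>x\<in>Xsub \<sigma>. real_of_int (f x) = g (shift x) - g x"
    and g: "continuous_map (Xtop \<sigma>) euclidean g"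
  obtains N where "k \<le> N" "in_beta_image \<sigma> (phi \<sigma> f N)"
proof -
  have ne: "nonerasing \<sigma>"
    using prim by (simp add: primitive_def)
  define \<delta> where "\<delta> = 1 / (4 * real (CARD('a) + 1))"
  have "0 < \<delta>"
    by (simp add: \<delta>_def)
  then obtain N where N: "k \<le> N" and close: "\<forall>y\<in>Xsub \<sigma>. \<forall>y'\<in>Xsub \<sigma>. y' 0 = y 0 \<longrightarrow>
      \<bar>g (bisubst (substpow \<sigma> N) y') - g (bisubst (substpow \<sigma> N) y)\<bar> < \<delta>"
    using continuous_bisubst_close_same_first_letter[OF prim const cob g] by blast
  define D where "D c = g (bisubst (substpow \<sigma> N) (SOME y. y \<in> Xsub \<sigma> \<and> y 0 = c))" for c
  have D: "\<bar>g (bisubst (substpow \<sigma> N) y) - D (y 0)\<bar> < \<delta>" if "y \<in> Xsub \<sigma>" for y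
  proof -
    let ?y' = "SOME y'. y' \<in> Xsub \<sigma> \<and> y' 0 = y 0"
    have "?y' \<in> Xsub \<sigma>" "?y' 0 = y 0"
      using someI[of "\<lambda>y'. y' \<in> Xsub \<sigma> \<and> y' 0 = y 0" y] that by simp_all
    then have "\<bar>g (bisubst (substpow \<sigma> N) ?y') - g (bisubst (substpow \<sigma> N) y)\<bar> < \<delta>"
      using close that by blast
    then show ?thesis
      by (simp add: D_def abs_minus_commute)
  qed
  have "\<bar>phi \<sigma> f N (a, b) - (D b - D a)\<bar> < 1 / (2 * real (CARD('a) + 1))" if ab: "(a, b) \<in> L2 \<sigma>" for a b
  proof -
    obtain y where y: "y \<in> cyl2 \<sigma> a b"
      using ab by (auto simp: L2_iff_cyl2_nonempty)
    then have "y \<in> Xsub \<sigma>" "y 0 = a" "shift y 0 = b"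
      by (simp_all add: cyl2_def shift_def)
    then have "\<bar>g (bisubst (substpow \<sigma> N) (shift y)) - D b\<bar> < \<delta>" "\<bar>g (bisubst (substpow \<sigma> N) y) - D a\<bar> < \<delta>"
      using D[of y] D[OF shift_in_Xsub[of y]] by simp_all
    moreover have "2 * \<delta> = 1 / (2 * real (CARD('a) + 1))"
      by (simp add: \<delta>_def field_simps)
    ultimately show ?thesis
      unfolding phi_eq_diff[OF ne const cob N y] by linarith
  qed
  moreover have "\<forall>p\<in>L2 \<sigma>. phi \<sigma> f N p \<in> \<int>"
    unfolding phi_def by (simp del: of_int_sum)
  ultimately have "in_beta_image \<sigma> (phi \<sigma> f N)"
    unfolding in_beta_image_def by (intro exact_differences_of_integer_approximation[of "L2 \<sigma>" "phi \<sigma> f N" D]) auto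
  with N show ?thesis
    by (rule that)
qed

theorem proposition4p6:
  fixes \<sigma> :: "'a::finite \<Rightarrow> 'a list"
    and f :: "(int \<Rightarrow> 'a) \<Rightarrow> int"
    and k :: nat
  assumes prim: "primitive \<sigma>"
    and cont: "continuous_map (Xtop \<sigma>) euclidean f"
    and const: "\<forall>(a, b)\<in>L2 \<sigma>. \<forall>j<length (substpow \<sigma> k a).
                  \<exists>c. \<forall>x\<in>atom \<sigma> k a b j. f x = c"
    and cob: "coboundary \<sigma> (\<lambda>x. real_of_int (f x))"
  shows "\<forall>n\<ge>k + card (L2 \<sigma>). in_beta_image \<sigma> (phi \<sigma> f n)"
proof (intro allI impI)
  fix n
  assume n: "k + card (L2 \<sigma>) \<le> n"
  have ne: "nonerasing \<sigma>"
    using prim by (simp add: primitive_def)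
  have const': "constant_on_atoms \<sigma> k f"
    using const by (simp add: constant_on_atoms_def)
  obtain g where g: "continuous_map (Xtop \<sigma>) euclidean g"
    and gcob: "\<forall>x\<in>Xsub \<sigma>. real_of_int (f x) = g (shift x) - g x"
    using cob by (auto simp: coboundary_def)
  obtain N where N: "k \<le> N" "in_beta_image \<sigma> (phi \<sigma> f N)"
    using exists_level_phi_in_beta_image[OF prim const' gcob g] .
  let ?B = "{v. in_beta_image \<sigma> (($) v)}" and ?\<Phi> = "\<chi> q. phi \<sigma> f k q"
  have iterate: "(pair_step \<sigma> ^^ j) ?\<Phi> \<in> ?B \<longleftrightarrow> in_beta_image \<sigma> (phi \<sigma> f (k + j))" for j
    unfolding mem_Collect_eq by (rule in_beta_image_cong) (rule funpow_pair_step_phi[OF ne const' gcob])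
  have invariant: "pair_step \<sigma> ` ?B \<subseteq> ?B"
    using in_beta_image_pair_step[OF ne] by blast
  have codim: "DIM(real ^ ('a \<times> 'a)) \<le> dim ?B + card (L2 \<sigma>)"
    by (rule dim_ge_if_contains_vanishing[OF subspace_beta_image])
      (auto simp: in_beta_image_def intro: exI[of _ "\<lambda>_. 0"])
  have "(pair_step \<sigma> ^^ (N - k)) ?\<Phi> \<in> ?B"
    using iterate N by simp
  then have "(pair_step \<sigma> ^^ (n - k)) ?\<Phi> \<in> ?B"
    by (rule funpow_in_invariant_subspace_stable[OF linear_pair_step subspace_beta_image invariant codim])
      (use n in simp)
  then show "in_beta_image \<sigma> (phi \<sigma> f n)"
    using iterate n by simp
qed

end
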